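(* Let $v,q\ge 2$, $m,s\ge1$ and $R\ge 0$ be integers with $ms-R\ge 2$. Then $$K_{vq}^{RT}(m,s,R)\le OCAN(ms-R,m,s,v)\, K_{q}^{RT}(m,s,R).$$
   Context: For positive integers $m,s$, the RT poset $[m\times s]$ is the set $\{1,\ldots,ms\}$ partitioned into $m$ blocks $B_i=\{is+1,\ldots,(i+1)s\}$; each block is a chain under the usual order of the integers, and elements of different blocks are incomparable. An ideal is a down-closed subset; an anti-ideal is the complement of an ideal; $\langle A\rangle$ denotes the smallest ideal containing $A$. For $x,y\in\mathbb{Z}_q^{ms}$, $d_{RT}(x,y)=|\langle\{i:x_i\neq y_i\}\rangle|$. A code $C\subseteq \mathbb{Z}_q^{ms}$ is an $R$-covering if every $x\in\mathbb{Z}_q^{ms}$ has some $c\in C$ with $d_{RT}(x,c)\le R$; $K_q^{RT}(m,s,R)$ is the smallest size of an $R$-covering. An ordered covering array $OCA(N;t,m,s,v)$ ($2\le t\le ms$) is an $N\times ms$ array over an alphabet of size $v$ with columns labeled by the elements of $[m\times s]$ such that for every anti-ideal $J$ of size $t$, every $t$-tuple over the alphabet appears as a row of the $N\times t$ subarray formed by the columns labeled by $J$; $OCAN(t,m,s,v)$ is the least such $N$. *)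

theory Defs
  imports Main
begin

(* RT poset [m x s]: positions 0..<m*s (0-indexed); block of position i is i div s;
   i precedes j iff they are in the same block and i <= j. *)

definition rt_le :: "nat \<Rightarrow> nat \<Rightarrow> nat \<Rightarrow> bool" where
  "rt_le s i j \<longleftrightarrow> i div s = j div s \<and> i \<le> j"

definition rt_ideal_gen :: "nat \<Rightarrow> nat \<Rightarrow> nat set \<Rightarrow> nat set" where
  "rt_ideal_gen m s A = {j. j < m * s \<and> (\<exists>i\<in>A. rt_le s j i)}"

definition rt_anti_ideal :: "nat \<Rightarrow> nat \<Rightarrow> nat set \<Rightarrow> bool" where
  "rt_anti_ideal m s J \<longleftrightarrow> J \<subseteq> {..<m * s} \<and>
     (\<forall>i\<in>J. \<forall>j<m * s. rt_le s i j \<longrightarrow> j \<in> J)"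

(* Z_q^n : words over {0..<q} of length n, represented extensionally (zero outside) *)
definition words :: "nat \<Rightarrow> nat \<Rightarrow> (nat \<Rightarrow> nat) set" where
  "words q n = {x. (\<forall>i<n. x i < q) \<and> (\<forall>i\<ge>n. x i = 0)}"

definition d_RT :: "nat \<Rightarrow> nat \<Rightarrow> (nat \<Rightarrow> nat) \<Rightarrow> (nat \<Rightarrow> nat) \<Rightarrow> nat" where
  "d_RT m s x y = card (rt_ideal_gen m s {i. i < m * s \<and> x i \<noteq> y i})"

definition rt_covering :: "nat \<Rightarrow> nat \<Rightarrow> nat \<Rightarrow> nat \<Rightarrow> (nat \<Rightarrow> nat) set \<Rightarrow> bool" where
  "rt_covering q m s R C \<longleftrightarrow> C \<subseteq> words q (m * s) \<and>
     (\<forall>x\<in>words q (m * s). \<exists>c\<in>C. d_RT m s x c \<le> R)"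

definition K_RT :: "nat \<Rightarrow> nat \<Rightarrow> nat \<Rightarrow> nat \<Rightarrow> nat" where
  "K_RT q m s R = (LEAST k. \<exists>C. rt_covering q m s R C \<and> card C = k)"

definition is_OCA :: "nat \<Rightarrow> nat \<Rightarrow> nat \<Rightarrow> nat \<Rightarrow> nat \<Rightarrow> (nat \<Rightarrow> nat \<Rightarrow> nat) \<Rightarrow> bool" where
  "is_OCA N t m s v A \<longleftrightarrow>
     (\<forall>r<N. \<forall>j<m * s. A r j < v) \<and>
     (\<forall>J. rt_anti_ideal m s J \<and> card J = t \<longrightarrow>
        (\<forall>f. (\<forall>j\<in>J. f j < v) \<longrightarrow> (\<exists>r<N. \<forall>j\<in>J. A r j = f j)))"

definition OCAN :: "nat \<Rightarrow> nat \<Rightarrow> nat \<Rightarrow> nat \<Rightarrow> nat" where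
  "OCAN t m s v = (LEAST N. \<exists>A. is_OCA N t m s v A)"

end

theory Submission
  imports Defs
begin

(* Write a word x over Z_vq digitwise as x = q * x' + x'' with x' over Z_v and x'' over Z_q.
   Cover x'' by a codeword c of an R-covering over Z_q; outside the ideal generated by the
   support of x'' - c, which has at most R elements, lies an anti-ideal of size at least
   ms - R, hence one of size exactly ms - R.  Some row a of the ordered covering array agrees
   with x' there, so the word q * a + c agrees with x on an anti-ideal of size ms - R, and its
   RT-distance to x is at most R.  The words q * a + c form an R-covering over Z_vq. *)

lemma finite_words: "finite (words q n)"
proof -
  have "words q n = {f. \<forall>i. (i \<in> {..<n} \<longrightarrow> f i \<in> {..<q}) \<and> (i \<notin> {..<n} \<longrightarrow> f i = 0)}"
    by (auto simp: words_def)
  also have "finite \<dots>"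
    by (rule finite_set_of_finite_funs) simp_all
  finally show ?thesis .
qed

lemma rt_anti_ideal_finite: "rt_anti_ideal m s J \<Longrightarrow> finite J"
  unfolding rt_anti_ideal_def by (meson finite_lessThan finite_subset)

lemma rt_anti_ideal_Diff_Min:
  assumes "rt_anti_ideal m s J"
  shows "rt_anti_ideal m s (J - {Min J})"
  unfolding rt_anti_ideal_def
proof (intro conjI ballI allI impI)
  show "J - {Min J} \<subseteq> {..<m * s}"
    using assms by (auto simp: rt_anti_ideal_def)
next
  fix i j assume i: "i \<in> J - {Min J}" and "j < m * s" and "rt_le s i j"
  then have "j \<in> J" and "i \<le> j"
    using assms by (auto simp: rt_anti_ideal_def rt_le_def)
  moreover have "Min J \<le> i"
    using i rt_anti_ideal_finite[OF assms] by simp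
  ultimately show "j \<in> J - {Min J}"
    using i by auto
qed

lemma rt_anti_ideal_subset_card:
  assumes "rt_anti_ideal m s J" and "t \<le> card J"
  shows "\<exists>J'\<subseteq>J. rt_anti_ideal m s J' \<and> card J' = t"
  using assms
proof (induction "card J - t" arbitrary: J)
  case 0
  then show ?case by auto
next
  case (Suc k)
  let ?J' = "J - {Min J}"
  have "J \<noteq> {}"
    using Suc.hyps(2) by auto
  then have "card ?J' = card J - 1"
    using rt_anti_ideal_finite[OF Suc.prems(1)] by simp
  then have "k = card ?J' - t" and "t \<le> card ?J'"
    using Suc.hyps(2) by auto
  then show ?case
    using Suc.hyps(1) rt_anti_ideal_Diff_Min[OF Suc.prems(1)] by blast
qed

lemma rt_ideal_gen_subset: "rt_ideal_gen m s D \<subseteq> {..<m * s}"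
  by (auto simp: rt_ideal_gen_def)

lemma rt_anti_ideal_compl_ideal_gen: "rt_anti_ideal m s ({..<m * s} - rt_ideal_gen m s D)"
  unfolding rt_anti_ideal_def rt_ideal_gen_def
  by (auto simp: rt_le_def)

lemma eq_if_notin_rt_ideal_gen:
  assumes "j < m * s" and "j \<notin> rt_ideal_gen m s {i. i < m * s \<and> x i \<noteq> y i}"
  shows "x j = y j"
  using assms by (auto simp: rt_ideal_gen_def rt_le_def)

lemma d_RT_le_if_eq_on_rt_anti_ideal:
  assumes J: "rt_anti_ideal m s J" and eq: "\<forall>j\<in>J. x j = y j"
  shows "d_RT m s x y \<le> m * s - card J"
proof -
  have "rt_ideal_gen m s {i. i < m * s \<and> x i \<noteq> y i} \<subseteq> {..<m * s} - J"
    using assms by (fastforce simp: rt_ideal_gen_def rt_anti_ideal_def)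
  then have "d_RT m s x y \<le> card ({..<m * s} - J)"
    unfolding d_RT_def by (intro card_mono) auto
  also have "\<dots> = m * s - card J"
    using J rt_anti_ideal_finite[OF J] by (simp add: rt_anti_ideal_def card_Diff_subset)
  finally show ?thesis .
qed

lemma rt_covering_words: "rt_covering q m s R (words q (m * s))"
  unfolding rt_covering_def
proof (intro conjI ballI subset_refl)
  fix x assume "x \<in> words q (m * s)"
  then show "\<exists>c\<in>words q (m * s). d_RT m s x c \<le> R"
    by (intro bexI[of _ x]) (simp_all add: d_RT_def rt_ideal_gen_def)
qed

lemma rt_covering_card_K_RT: "\<exists>C. rt_covering q m s R C \<and> card C = K_RT q m s R"
proof -
  have "\<exists>k C. rt_covering q m s R C \<and> card C = k"
    using rt_covering_words by blast
  then show ?thesis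
    unfolding K_RT_def by (rule LeastI_ex)
qed

lemma K_RT_le_card: "rt_covering q m s R C \<Longrightarrow> K_RT q m s R \<le> card C"
  unfolding K_RT_def by (intro Least_le) blast

lemma ex_is_OCA:
  assumes "0 < v"
  shows "\<exists>N A. is_OCA N t m s v A"
proof -
  let ?W = "words v (m * s)"
  obtain h where h: "bij_betw h {0..<card ?W} ?W"
    using ex_bij_betw_nat_finite[OF finite_words] by blast
  have rows: "h ` {0..<card ?W} = ?W"
    using h by (simp add: bij_betw_def)
  have "\<exists>r<card ?W. \<forall>j\<in>J. h r j = f j"
    if J: "rt_anti_ideal m s J" and f: "\<forall>j\<in>J. f j < v" for J f
  proof -
    define g where "g j = (if j \<in> J then f j else 0)" for j
    have "g \<in> ?W"
      using J f assms by (auto simp: g_def words_def rt_anti_ideal_def)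
    then have "g \<in> h ` {0..<card ?W}"
      using rows by simp
    then obtain r where "r < card ?W" and "h r = g"
      by auto
    then show ?thesis
      by (intro exI[of _ r]) (simp add: g_def)
  qed
  moreover have "h r j < v" if "r < card ?W" and "j < m * s" for r j
  proof -
    have "h r \<in> ?W"
      using that(1) rows by auto
    then show ?thesis
      using that(2) by (simp add: words_def)
  qed
  ultimately show ?thesis
    unfolding is_OCA_def by blast
qed

lemma is_OCA_OCAN: "0 < v \<Longrightarrow> \<exists>A. is_OCA (OCAN t m s v) t m s v A"
  unfolding OCAN_def using ex_is_OCA by (rule LeastI_ex) blast

lemma is_OCA_obtain_row:
  assumes "is_OCA N t m s v A" and "rt_anti_ideal m s J" and "card J = t"
    and "\<forall>j\<in>J. f j < v"
  obtains r where "r < N" and "\<forall>j\<in>J. A r j = f j"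
  using assms unfolding is_OCA_def by blast

definition digit_word :: "nat \<Rightarrow> nat \<Rightarrow> (nat \<Rightarrow> nat) \<Rightarrow> (nat \<Rightarrow> nat) \<Rightarrow> nat \<Rightarrow> nat" where
  "digit_word q n a c j = (if j < n then a j * q + c j else 0)"

lemma digit_word_in_words:
  assumes "\<forall>j<n. a j < v" and "c \<in> words q n"
  shows "digit_word q n a c \<in> words (v * q) n"
proof -
  have "a j * q + c j < v * q" if "j < n" for j
  proof -
    have "a j * q + c j < (a j + 1) * q"
      using assms(2) that by (simp add: words_def)
    also have "\<dots> \<le> v * q"
      using assms(1) that by (intro mult_right_mono) auto
    finally show ?thesis .
  qed
  then show ?thesis
    by (simp add: words_def digit_word_def)
qed

lemma rt_covering_digit_words:
  assumes A: "is_OCA N t m s v A" and C: "rt_covering q m s R C"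
    and t: "t = m * s - R" and "0 < q"
  shows "rt_covering (v * q) m s R ((\<lambda>(r, c). digit_word q (m * s) (A r) c) ` ({..<N} \<times> C))"
  unfolding rt_covering_def
proof (intro conjI ballI)
  show "(\<lambda>(r, c). digit_word q (m * s) (A r) c) ` ({..<N} \<times> C) \<subseteq> words (v * q) (m * s)"
    using A C by (auto simp: is_OCA_def rt_covering_def intro!: digit_word_in_words)
next
  fix x assume x: "x \<in> words (v * q) (m * s)"
  have "(\<lambda>j. x j mod q) \<in> words q (m * s)"
    using x \<open>0 < q\<close> by (simp add: words_def)
  then obtain c where c: "c \<in> C" and dist: "d_RT m s (\<lambda>j. x j mod q) c \<le> R"
    using C by (auto simp: rt_covering_def)
  define I where "I = rt_ideal_gen m s {i. i < m * s \<and> x i mod q \<noteq> c i}"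
  have "card ({..<m * s} - I) = m * s - card I"
    unfolding I_def
    by (simp add: card_Diff_subset finite_subset[OF rt_ideal_gen_subset] rt_ideal_gen_subset)
  then have card_compl: "t \<le> card ({..<m * s} - I)"
    using dist t by (simp add: I_def d_RT_def)
  have "rt_anti_ideal m s ({..<m * s} - I)"
    unfolding I_def by (rule rt_anti_ideal_compl_ideal_gen)
  then obtain J where J_sub: "J \<subseteq> {..<m * s} - I" and J: "rt_anti_ideal m s J" "card J = t"
    using rt_anti_ideal_subset_card[OF _ card_compl] by blast
  have x_mod: "x j mod q = c j" if "j \<in> J" for j
  proof -
    have "j < m * s" and "j \<notin> I"
      using that J_sub by auto
    then show ?thesis
      using eq_if_notin_rt_ideal_gen[of j m s "\<lambda>j. x j mod q" c] by (simp add: I_def)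
  qed
  have "\<forall>j\<in>J. x j div q < v"
    using J_sub x by (auto simp: words_def less_mult_imp_div_less)
  then obtain r where "r < N" and row: "\<forall>j\<in>J. A r j = x j div q"
    by (rule is_OCA_obtain_row[OF A J])
  have "x j = digit_word q (m * s) (A r) c j" if "j \<in> J" for j
  proof -
    have "j < m * s"
      using that J_sub by auto
    then show ?thesis
      using that row by (simp add: digit_word_def x_mod[OF that, symmetric])
  qed
  then have "d_RT m s x (digit_word q (m * s) (A r) c) \<le> m * s - card J"
    using d_RT_le_if_eq_on_rt_anti_ideal[OF J(1)] by blast
  then have "d_RT m s x (digit_word q (m * s) (A r) c) \<le> R"
    using J(2) t by simp
  then show "\<exists>w\<in>(\<lambda>(r, c). digit_word q (m * s) (A r) c) ` ({..<N} \<times> C). d_RT m s x w \<le> R"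
    using \<open>r < N\<close> c by (intro bexI[OF _ imageI[of "(r, c)"]]) auto
qed

lemma K_RT_mult_le:
  assumes "is_OCA N (m * s - R) m s v A" and "0 < q"
  shows "K_RT (v * q) m s R \<le> N * K_RT q m s R"
proof -
  obtain C where C: "rt_covering q m s R C" and card_C: "card C = K_RT q m s R"
    using rt_covering_card_K_RT by blast
  let ?C' = "(\<lambda>(r, c). digit_word q (m * s) (A r) c) ` ({..<N} \<times> C)"
  have "K_RT (v * q) m s R \<le> card ?C'"
    using rt_covering_digit_words[OF assms(1) C refl assms(2)] by (rule K_RT_le_card)
  also have "\<dots> \<le> card ({..<N} \<times> C)"
    by (rule card_image_le) (use C finite_words in \<open>auto simp: rt_covering_def intro: finite_subset\<close>)
  also have "\<dots> = N * K_RT q m s R"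
    using card_C by (simp add: card_cartesian_product)
  finally show ?thesis .
qed

theorem theorem3:
  fixes v q m s R :: nat
  assumes "v \<ge> 2" and "q \<ge> 2" and "m \<ge> 1" and "s \<ge> 1" and "m * s - R \<ge> 2"
  shows "K_RT (v * q) m s R \<le> OCAN (m * s - R) m s v * K_RT q m s R"
proof -
  obtain A where "is_OCA (OCAN (m * s - R) m s v) (m * s - R) m s v A"
    using is_OCA_OCAN assms(1) by fastforce
  then show ?thesis
    using K_RT_mult_le assms(2) by simp
qed

end
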